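(* Consider $27$ real variables $x_{\kappa\kappa_A\kappa_B}$ indexed by $(\kappa,\kappa_A,\kappa_B)\in\{A,B,X\}^3$. Let $$T=\sum_{A\kappa_A\kappa_B\to B\lambda_A\lambda_B}x_{A\kappa_A\kappa_B}x_{B\lambda_A\lambda_B},\quad R=\sum_{\kappa A\kappa_B\to\lambda B\lambda_B}x_{\kappa A\kappa_B}x_{\lambda B\lambda_B},\quad S=\sum_{\kappa\kappa_A A\to\lambda\lambda_A B}x_{\kappa\kappa_A A}x_{\lambda\lambda_A B},$$ and for $\mu\in\{A,B,X\}$ let $s_\mu=\sum_{\kappa_A,\kappa_B\in\{A,B,X\}}x_{\mu\kappa_A\kappa_B}$. Then the maximum of $$s_X\,T+s_A\min\{T,R\}+s_B\min\{T,S\}$$ over all choices of non-negative reals $x_{\kappa\kappa_A\kappa_B}$ summing to one is equal to $4/27$.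
   Context: For triples $(\kappa,\kappa_A,\kappa_B),(\lambda,\lambda_A,\lambda_B)\in\{A,B,X\}^3$ write $\kappa\kappa_A\kappa_B\to\lambda\lambda_A\lambda_B$ if each of the pairs $(\kappa,\lambda)$, $(\kappa_A,\lambda_A)$, $(\kappa_B,\lambda_B)$ is one of $(A,B),(A,X),(B,X),(X,A),(X,B),(X,X)$, and moreover $(\kappa_B,\lambda_A)\neq(A,B)$. Each sum above ranges over all pairs of triples satisfying $\to$ and having the displayed fixed coordinates (e.g. in $T$ the first triple has first coordinate $A$ and the second triple has first coordinate $B$; in $R$ the second coordinates are $A$ and $B$; in $S$ the third coordinates are $A$ and $B$). *)

theory Defs
  imports Main "HOL.Real"
begin

datatype lab = LA | LB | LX

lemma UNIV_lab: "(UNIV :: lab set) = {LA, LB, LX}"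
  by (auto intro: lab.exhaust)

instance lab :: finite
  by standard (simp add: UNIV_lab)

type_synonym triple = "lab \<times> lab \<times> lab"

definition ok :: "lab \<Rightarrow> lab \<Rightarrow> bool" where
  "ok k l \<longleftrightarrow> (k, l) \<in> {(LA,LB),(LA,LX),(LB,LX),(LX,LA),(LX,LB),(LX,LX)}"

definition arrow :: "triple \<Rightarrow> triple \<Rightarrow> bool" where
  "arrow t u \<longleftrightarrow> (case t of (k, kA, kB) \<Rightarrow> case u of (l, lA, lB) \<Rightarrow>
      ok k l \<and> ok kA lA \<and> ok kB lB \<and> (kB, lA) \<noteq> (LA, LB))"

definition T_sum :: "(triple \<Rightarrow> real) \<Rightarrow> real" where
  "T_sum x = (\<Sum>(t, u) \<in> {(t, u). arrow t u \<and> fst t = LA \<and> fst u = LB}. x t * x u)"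

definition R_sum :: "(triple \<Rightarrow> real) \<Rightarrow> real" where
  "R_sum x = (\<Sum>(t, u) \<in> {(t, u). arrow t u \<and> fst (snd t) = LA \<and> fst (snd u) = LB}. x t * x u)"

definition S_sum :: "(triple \<Rightarrow> real) \<Rightarrow> real" where
  "S_sum x = (\<Sum>(t, u) \<in> {(t, u). arrow t u \<and> snd (snd t) = LA \<and> snd (snd u) = LB}. x t * x u)"

definition s_sum :: "(triple \<Rightarrow> real) \<Rightarrow> lab \<Rightarrow> real" where
  "s_sum x m = (\<Sum>kA\<in>UNIV. \<Sum>kB\<in>UNIV. x (m, kA, kB))"

definition objective :: "(triple \<Rightarrow> real) \<Rightarrow> real" where
  "objective x = s_sum x LX * T_sum x + s_sum x LA * min (T_sum x) (R_sum x)
                 + s_sum x LB * min (T_sum x) (S_sum x)"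

definition feasible :: "(triple \<Rightarrow> real) \<Rightarrow> bool" where
  "feasible x \<longleftrightarrow> (\<forall>t. 0 \<le> x t) \<and> (\<Sum>t\<in>UNIV. x t) = 1"

end

theory Submission
  imports Defs
begin

(*
  Write p, q, r for s_A, s_B, s_X; clearly T <= p q. Split the triples with first coordinate
  A, B, X into U-type triples (kappa_A <> B and kappa_B <> A) and the rest, with masses a, b;
  c, d; u, w. A U-type triple is never the right end of an R-pair nor the left end of an
  S-pair, and a finite check on pairs of triples gives
    R + S <= E := a d + b c + u (b + d) + w (a + c) + u w.
  Since min{T,R} + min{T,S} <= R + S, the objective is at most r p q + |p - q| p q + min{p,q} E.
  For q <= p this is p q (p + u + w) + q F with F = E - p q bilinear in (b, d) on
  [0,p] x [0,q], so F is dominated by its value at a corner of the box; each of the four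
  corner polynomials is at most 4/27 (p + q + u + w)^3 by AM-GM for three terms.
  Equality holds for x_AAX = 2/3, x_BBX = 1/3.
*)

section \<open>The polynomial inequality\<close>

lemma amgm_three:
  fixes a b c :: real
  assumes "0 \<le> a" "0 \<le> b" "0 \<le> c"
  shows "27 * a * b * c \<le> (a + b + c) ^ 3"
proof -
  have identity: "2 * ((a + b + c) ^ 3 - 27 * a * b * c)
      = (a + b + c) * ((a - b)^2 + (b - c)^2 + (c - a)^2)
        + 6 * (a * (b - c)^2 + b * (c - a)^2 + c * (a - b)^2)"
    by (simp add: power2_eq_square power3_eq_cube algebra_simps)
  have "0 \<le> (a + b + c) * ((a - b)^2 + (b - c)^2 + (c - a)^2)"
    and "0 \<le> a * (b - c)^2" "0 \<le> b * (c - a)^2" "0 \<le> c * (a - b)^2"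
    using assms by simp_all
  then have "0 \<le> 2 * ((a + b + c) ^ 3 - 27 * a * b * c)"
    unfolding identity by simp
  then show ?thesis by simp
qed

lemma mult_mult_add_le_cube:
  fixes x y z :: real
  assumes "0 \<le> x" "0 \<le> y" "0 \<le> z"
  shows "x * y * (x + 2 * z) \<le> 4/27 * (x + y + z) ^ 3"
proof -
  have "27 * x * (2 * y) * (x + 2 * z) \<le> (x + 2 * y + (x + 2 * z)) ^ 3"
    using amgm_three[of x "2 * y" "x + 2 * z"] assms by simp
  also have "\<dots> = 8 * (x + y + z) ^ 3"
    by (simp add: power3_eq_cube algebra_simps)
  finally show ?thesis by simp
qed

lemma corner_bound_cross:
  fixes p q u w :: real
  assumes "0 \<le> p" "0 \<le> q" "0 \<le> u" "0 \<le> w" "q \<le> p"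
  shows "p * q * (p + u + w) + q * (u * w + w * q + p * u) \<le> 4/27 * (p + q + u + w) ^ 3"
proof -
  define P where "P = p + u"
  have "w * q \<le> w * P"
    using assms by (simp add: P_def mult_left_mono)
  then have "P^2 - u^2 + w * (P + q) \<le> P^2 + w * (2 * P)"
    by (simp add: algebra_simps add_increasing2)
  then have "q * (P^2 - u^2 + w * (P + q)) \<le> q * (P^2 + w * (2 * P))"
    using assms by (simp add: mult_left_mono)
  also have "\<dots> = P * q * (P + 2 * w)"
    by (simp add: power2_eq_square algebra_simps)
  also have "\<dots> \<le> 4/27 * (P + q + w) ^ 3"
    using mult_mult_add_le_cube assms by (simp add: P_def)
  finally show ?thesis
    by (simp add: P_def power2_eq_square algebra_simps)
qed

lemma corner_bound_diag:
  fixes p q u w :: real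
  assumes "0 \<le> p" "0 \<le> q" "0 \<le> u" "0 \<le> w" "q \<le> p"
  shows "p * q * (p + u + w) + q * (u * w + w * p + w * q - p * q) \<le> 4/27 * (p + q + u + w) ^ 3"
proof -
  define P where "P = p + u"
  define G where "G = (p * p + p * u) + (2 * p * w + u * w) + q * (w - p)"
  have G_le: "G \<le> P^2 + 2 * P * w + q * (w - p)"
    using assms by (simp add: G_def P_def power2_eq_square algebra_simps)
  have "q * G \<le> 4/27 * (P + q + w) ^ 3"
  proof (cases "w \<le> p")
    case True
    then have "q * (w - p) \<le> 0"
      using assms by (simp add: mult_nonneg_nonpos)
    then have "q * G \<le> q * (P^2 + 2 * P * w)"
      using G_le assms by (simp add: mult_left_mono)
    also have "\<dots> = P * q * (P + 2 * w)"
      by (simp add: power2_eq_square algebra_simps)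
    also have "\<dots> \<le> 4/27 * (P + q + w) ^ 3"
      using mult_mult_add_le_cube assms by (simp add: P_def)
    finally show ?thesis .
  next
    case False
    then have "q * w \<le> w * w"
      using assms by (intro mult_right_mono) auto
    then have "q * (w - p) \<le> w * w"
      using assms by (simp add: algebra_simps add_increasing)
    then have "G \<le> (P + w)^2"
      using G_le by (simp add: power2_eq_square algebra_simps)
    then have "q * G \<le> q * (P + w)^2"
      using assms by (simp add: mult_left_mono)
    also have "\<dots> = (P + w) * q * ((P + w) + 2 * 0)"
      by (simp add: power2_eq_square)
    also have "\<dots> \<le> 4/27 * (P + q + w) ^ 3"
      using mult_mult_add_le_cube[of "P + w" q 0] assms by (simp add: P_def algebra_simps)
    finally show ?thesis .
  qed
  then show ?thesis
    by (simp add: G_def P_def algebra_simps)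
qed

lemma affine_le_max_endpoints:
  fixes k0 k1 b p :: real
  assumes "0 \<le> b" "b \<le> p"
  shows "k0 + k1 * b \<le> max k0 (k0 + k1 * p)"
  using assms mult_left_mono[of b p k1] mult_nonpos_nonneg[of k1 b] by (cases "0 \<le> k1") auto

lemma bilinear_le_corner:
  fixes k0 k1 k2 k3 b d p q :: real
  assumes "0 \<le> b" "b \<le> p" "0 \<le> d" "d \<le> q"
  shows "\<exists>b'\<in>{0, p}. \<exists>d'\<in>{0, q}.
           k0 + k1 * b + k2 * d + k3 * (b * d) \<le> k0 + k1 * b' + k2 * d' + k3 * (b' * d')"
proof -
  define f where "f b' d' = k0 + k1 * b' + k2 * d' + k3 * (b' * d')" for b' d'
  have "f b d \<le> max (f 0 d) (f p d)"
    using affine_le_max_endpoints[OF assms(1,2), of "k0 + k2 * d" "k1 + k3 * d"]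
    by (simp add: f_def algebra_simps)
  moreover have "f 0 d \<le> max (f 0 0) (f 0 q)" and "f p d \<le> max (f p 0) (f p q)"
    using affine_le_max_endpoints[OF assms(3,4), of "k0" "k2"]
      affine_le_max_endpoints[OF assms(3,4), of "k0 + k1 * p" "k2 + k3 * p"]
    by (simp_all add: f_def algebra_simps)
  ultimately have "f b d \<le> max (max (f 0 0) (f 0 q)) (max (f p 0) (f p q))"
    by (meson max.mono order_trans)
  then have "\<exists>b'\<in>{0, p}. \<exists>d'\<in>{0, q}. f b d \<le> f b' d'"
    by (auto simp: max_def split: if_splits)
  then show ?thesis
    unfolding f_def .
qed

definition cross_mass :: "real \<Rightarrow> real \<Rightarrow> real \<Rightarrow> real \<Rightarrow> real \<Rightarrow> real \<Rightarrow> real" where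
  "cross_mass a b c d u w = a * d + b * c + u * (b + d) + w * (a + c) + u * w"

lemma reduced_objective_le_ordered:
  fixes p q b d u w :: real
  assumes b: "0 \<le> b" "b \<le> p" and d: "0 \<le> d" "d \<le> q"
    and nonneg: "0 \<le> u" "0 \<le> w" and "q \<le> p" and total: "p + q + u + w = 1"
  shows "(u + w) * (p * q) + (p - q) * (p * q) + q * cross_mass (p - b) b (q - d) d u w \<le> 4/27"
proof -
  have pq: "0 \<le> p" "0 \<le> q" "q \<le> p"
    using b d \<open>q \<le> p\<close> by linarith+
  define F where "F b' d' = cross_mass (p - b') b' (q - d') d' u w - p * q" for b' d'
  have F_bilinear: "F b' d' = (w * (p + q) + u * w - p * q) + (u - w + q) * b' + (u - w + p) * d'
      + (-2) * (b' * d')" for b' d'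
    by (simp add: F_def cross_mass_def algebra_simps)
  have "\<exists>b'\<in>{0, p}. \<exists>d'\<in>{0, q}. F b d \<le> F b' d'"
    unfolding F_bilinear by (rule bilinear_le_corner[OF b d])
  then obtain b' d' where corner: "b' \<in> {0, p}" "d' \<in> {0, q}" and F_le: "F b d \<le> F b' d'"
    by blast
  have "(u + w) * (p * q) + (p - q) * (p * q) + q * cross_mass (p - b) b (q - d) d u w
      = p * q * (p + u + w) + q * F b d"
    by (simp add: F_def algebra_simps)
  also have "\<dots> \<le> p * q * (p + u + w) + q * F b' d'"
    using F_le pq by (simp add: mult_left_mono)
  also have "\<dots> \<le> 4/27 * (p + q + u + w) ^ 3"
  proof -
    from corner consider "b' = 0" "d' = 0" | "b' = p" "d' = 0" | "b' = 0" "d' = q" | "b' = p" "d' = q"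
      by blast
    then show ?thesis
    proof cases
      case 1
      then have "F b' d' = u * w + w * p + w * q - p * q"
        by (simp add: F_def cross_mass_def algebra_simps)
      then show ?thesis
        using corner_bound_diag[OF pq(1,2) nonneg pq(3)] by simp
    next
      case 2
      then have "F b' d' = u * w + w * q + p * u"
        by (simp add: F_def cross_mass_def algebra_simps)
      then show ?thesis
        using corner_bound_cross[OF pq(1,2) nonneg pq(3)] by simp
    next
      case 3
      then have "F b' d' = w * u + u * q + p * w"
        by (simp add: F_def cross_mass_def algebra_simps)
      then show ?thesis
        using corner_bound_cross[OF pq(1,2) nonneg(2,1) pq(3)] by (simp add: ac_simps)
    next
      case 4
      then have "F b' d' = w * u + u * p + u * q - p * q"
        by (simp add: F_def cross_mass_def algebra_simps)
      then show ?thesis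
        using corner_bound_diag[OF pq(1,2) nonneg(2,1) pq(3)] by (simp add: ac_simps)
    qed
  qed
  finally show ?thesis
    using total by simp
qed

lemma reduced_objective_le:
  fixes a b c d u w :: real
  assumes "0 \<le> a" "0 \<le> b" "0 \<le> c" "0 \<le> d" "0 \<le> u" "0 \<le> w"
    and "a + b + c + d + u + w = 1"
  shows "(u + w) * ((a + b) * (c + d)) + \<bar>(a + b) - (c + d)\<bar> * ((a + b) * (c + d))
         + min (a + b) (c + d) * cross_mass a b c d u w \<le> 4/27"
proof (cases "c + d \<le> a + b")
  case True
  then show ?thesis
    using reduced_objective_le_ordered[of b "a + b" d "c + d" u w] assms by simp
next
  case False
  have "cross_mass c d a b u w = cross_mass a b c d u w"
    by (simp add: cross_mass_def algebra_simps)
  then show ?thesis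
    using reduced_objective_le_ordered[of d "c + d" b "a + b" u w] False assms by (simp add: algebra_simps)
qed

lemma weighted_sum_le:
  fixes p q m1 m2 M :: real
  assumes "m1 \<le> M" "m2 \<le> M"
  shows "p * m1 + q * m2 \<le> \<bar>p - q\<bar> * M + min p q * (m1 + m2)"
  using mult_left_mono[OF assms(1), of "p - q"] mult_left_mono[OF assms(2), of "q - p"]
  by (cases "q \<le> p") (auto simp: algebra_simps abs_if min_def)

lemma weighted_mins_le:
  fixes p q r T R S E :: real
  assumes "0 \<le> p" "0 \<le> q" "0 \<le> r" "T \<le> p * q" "R + S \<le> E"
  shows "r * T + p * min T R + q * min T S \<le> r * (p * q) + \<bar>p - q\<bar> * (p * q) + min p q * E"
proof -
  have "p * min T R + q * min T S \<le> \<bar>p - q\<bar> * T + min p q * (min T R + min T S)"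
    by (rule weighted_sum_le) simp_all
  also have "\<dots> \<le> \<bar>p - q\<bar> * (p * q) + min p q * E"
    using assms min.cobounded2[of T R] min.cobounded2[of T S]
    by (intro add_mono mult_left_mono) auto
  finally show ?thesis
    using mult_left_mono[OF \<open>T \<le> p * q\<close> \<open>0 \<le> r\<close>] by linarith
qed

section \<open>Sums over pairs as quadratic forms\<close>

definition qform :: "('a::finite \<Rightarrow> real) \<Rightarrow> ('a \<Rightarrow> 'a \<Rightarrow> real) \<Rightarrow> real" where
  "qform x g = (\<Sum>t\<in>UNIV. \<Sum>u\<in>UNIV. g t u * (x t * x u))"

definition mass :: "('a::finite \<Rightarrow> real) \<Rightarrow> ('a \<Rightarrow> bool) \<Rightarrow> real" where
  "mass x P = sum x {t. P t}"

lemma sum_pairs_eq_qform: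
  fixes x :: "'a::finite \<Rightarrow> real"
  shows "(\<Sum>(t, u) \<in> {(t, u). P t u}. x t * x u) = qform x (\<lambda>t u. of_bool (P t u))"
  unfolding qform_def sum.cartesian_product
  by (simp add: sum.inter_filter[symmetric] case_prod_unfold)

lemma qform_add: "qform x (\<lambda>t u. g t u + h t u) = qform x g + qform x h"
  unfolding qform_def by (simp add: distrib_right sum.distrib)

lemma qform_sum:
  "qform x (\<lambda>t u. \<Sum>i\<in>I. g i t u) = (\<Sum>i\<in>I. qform x (g i))"
  unfolding qform_def sum_distrib_right by (subst sum.swap, subst (2) sum.swap) simp

lemma qform_swap: "qform x g = qform x (\<lambda>t u. g u t)"
  unfolding qform_def by (subst sum.swap) (simp add: mult.commute)

lemma qform_mono:
  assumes "\<And>t u. g t u \<le> h t u" and "\<And>t. 0 \<le> x t"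
  shows "qform x g \<le> qform x h"
  unfolding qform_def by (intro sum_mono mult_right_mono assms mult_nonneg_nonneg)

lemma qform_support:
  assumes "\<And>t. t \<notin> A \<Longrightarrow> x t = 0"
  shows "qform x g = (\<Sum>t\<in>A. \<Sum>u\<in>A. g t u * (x t * x u))"
  unfolding qform_def using assms
  by (intro sum.mono_neutral_right sum.mono_neutral_cong_right) auto

lemma qform_of_bool_prod:
  "qform x (\<lambda>t u. of_bool (P t \<and> Q u)) = mass x P * mass x Q"
proof -
  have "qform x (\<lambda>t u. of_bool (P t \<and> Q u))
      = (\<Sum>t\<in>UNIV. \<Sum>u\<in>UNIV. (of_bool (P t) * x t) * (of_bool (Q u) * x u))"
    unfolding qform_def by (intro sum.cong refl) simp
  also have "\<dots> = mass x P * mass x Q"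
    unfolding sum_product[symmetric] mass_def by (simp add: Int_def)
  finally show ?thesis .
qed

lemma qform_class_kernel:
  fixes x :: "'a::finite \<Rightarrow> real" and cls :: "'a \<Rightarrow> 'b"
  assumes "finite K"
  shows "qform x (\<lambda>t u. of_bool ((cls t, cls u) \<in> K))
       = (\<Sum>(c, c')\<in>K. mass x (\<lambda>t. cls t = c) * mass x (\<lambda>t. cls t = c'))"
proof -
  have "of_bool ((cls t, cls u) \<in> K) = (\<Sum>(c, c')\<in>K. of_bool (cls t = c \<and> cls u = c') :: real)" for t u
  proof -
    have "(\<Sum>(c, c')\<in>K. of_bool (cls t = c \<and> cls u = c') :: real)
        = (\<Sum>z\<in>K. if z = (cls t, cls u) then 1 else 0)"
      by (intro sum.cong) auto
    then show ?thesis using assms by simp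
  qed
  then show ?thesis
    by (simp add: qform_sum case_prod_unfold qform_of_bool_prod)
qed

lemma mass_nonneg: "(\<And>t. 0 \<le> x t) \<Longrightarrow> 0 \<le> mass x P"
  unfolding mass_def by (simp add: sum_nonneg)

lemma mass_split: "mass x P = mass x (\<lambda>t. P t \<and> Q t) + mass x (\<lambda>t. P t \<and> \<not> Q t)"
proof -
  have "{t. P t} = {t. P t \<and> Q t} \<union> {t. P t \<and> \<not> Q t}" by auto
  then show ?thesis
    unfolding mass_def by (simp add: sum.union_disjoint[symmetric] disjoint_iff)
qed

section \<open>The masses of the classes of triples\<close>

lemma sum_UNIV_triple:
  "(\<Sum>t\<in>UNIV. f t) = (\<Sum>k\<in>UNIV. \<Sum>kA\<in>UNIV. \<Sum>kB\<in>UNIV. f (k, kA, kB))"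
  by (simp add: sum.cartesian_product)

lemma s_sum_eq_mass: "s_sum x k = mass x (\<lambda>t. fst t = k)"
proof -
  have "{t :: triple. fst t = k} = {k} \<times> UNIV" by auto
  then have "mass x (\<lambda>t. fst t = k) = (\<Sum>k'\<in>{k}. \<Sum>z\<in>UNIV. x (k', z))"
    unfolding mass_def by (simp only: sum.cartesian_product')
  also have "\<dots> = s_sum x k" by (simp add: s_sum_def) (simp add: sum.cartesian_product)
  finally show ?thesis ..
qed

definition U_type :: "triple \<Rightarrow> bool" where
  "U_type t \<longleftrightarrow> fst (snd t) \<noteq> LB \<and> snd (snd t) \<noteq> LA"

definition triple_class :: "triple \<Rightarrow> lab \<times> bool" where
  "triple_class t = (fst t, U_type t)"

definition class_mass :: "(triple \<Rightarrow> real) \<Rightarrow> lab \<times> bool \<Rightarrow> real" where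
  "class_mass x c = mass x (\<lambda>t. triple_class t = c)"

lemma s_sum_eq_class_masses: "s_sum x k = class_mass x (k, True) + class_mass x (k, False)"
  unfolding s_sum_eq_mass class_mass_def triple_class_def
  by (subst mass_split[where Q = U_type]) (simp add: conj_commute)

lemma sum_s_sum: "s_sum x LA + s_sum x LB + s_sum x LX = (\<Sum>t\<in>UNIV. x t)"
  unfolding s_sum_def sum_UNIV_triple by (simp add: UNIV_lab)

lemma T_sum_le:
  assumes "\<And>t. 0 \<le> x t"
  shows "T_sum x \<le> s_sum x LA * s_sum x LB"
proof -
  have "T_sum x = qform x (\<lambda>t u. of_bool (arrow t u \<and> fst t = LA \<and> fst u = LB))"
    unfolding T_sum_def by (rule sum_pairs_eq_qform)
  also have "\<dots> \<le> qform x (\<lambda>t u. of_bool (fst t = LA \<and> fst u = LB))"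
    using assms by (intro qform_mono) auto
  also have "\<dots> = s_sum x LA * s_sum x LB"
    unfolding qform_of_bool_prod s_sum_eq_mass ..
  finally show ?thesis .
qed

definition E_class_pairs :: "((lab \<times> bool) \<times> (lab \<times> bool)) set" where
  "E_class_pairs = {((LA, True), (LB, False)), ((LA, False), (LB, True)),
                    ((LX, True), (LA, False)), ((LX, True), (LB, False)),
                    ((LX, False), (LA, True)), ((LX, False), (LB, True)),
                    ((LX, True), (LX, False))}"

definition R_pair :: "triple \<Rightarrow> triple \<Rightarrow> bool" where
  "R_pair t u \<longleftrightarrow> arrow t u \<and> fst (snd t) = LA \<and> fst (snd u) = LB"

definition S_pair :: "triple \<Rightarrow> triple \<Rightarrow> bool" where
  "S_pair t u \<longleftrightarrow> arrow t u \<and> snd (snd t) = LA \<and> snd (snd u) = LB"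

lemma R_S_pairs_le_E_class_pairs:
  "of_bool (R_pair t u) + of_bool (S_pair t u) + of_bool (R_pair u t) + of_bool (S_pair u t)
   \<le> (of_bool ((triple_class t, triple_class u) \<in> E_class_pairs)
      + of_bool ((triple_class u, triple_class t) \<in> E_class_pairs) :: real)"
proof -
  obtain k a b where t: "t = (k, a, b)" by (cases t)
  obtain l a' b' where u: "u = (l, a', b')" by (cases u)
  show ?thesis
    unfolding t u
    by (cases k; cases a; cases b; cases l; cases a'; cases b';
        simp add: R_pair_def S_pair_def arrow_def ok_def E_class_pairs_def triple_class_def U_type_def)
qed

lemma qform_E_class_pairs:
  "qform x (\<lambda>t u. of_bool ((triple_class t, triple_class u) \<in> E_class_pairs))
   = cross_mass (class_mass x (LA, True)) (class_mass x (LA, False))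
       (class_mass x (LB, True)) (class_mass x (LB, False))
       (class_mass x (LX, True)) (class_mass x (LX, False))"
proof -
  have "finite E_class_pairs" by (simp add: E_class_pairs_def)
  then have "qform x (\<lambda>t u. of_bool ((triple_class t, triple_class u) \<in> E_class_pairs))
      = (\<Sum>(c, c')\<in>E_class_pairs. class_mass x c * class_mass x c')"
    unfolding class_mass_def by (rule qform_class_kernel)
  also have "\<dots> = cross_mass (class_mass x (LA, True)) (class_mass x (LA, False))
       (class_mass x (LB, True)) (class_mass x (LB, False))
       (class_mass x (LX, True)) (class_mass x (LX, False))"
    unfolding E_class_pairs_def cross_mass_def by (simp add: algebra_simps)
  finally show ?thesis .
qed

lemma R_sum_plus_S_sum_le:
  assumes "\<And>t. 0 \<le> x t"
  shows "R_sum x + S_sum x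
    \<le> cross_mass (class_mass x (LA, True)) (class_mass x (LA, False))
         (class_mass x (LB, True)) (class_mass x (LB, False))
         (class_mass x (LX, True)) (class_mass x (LX, False))"
proof -
  let ?R = "\<lambda>t u. of_bool (R_pair t u) :: real"
  let ?S = "\<lambda>t u. of_bool (S_pair t u) :: real"
  let ?E = "\<lambda>t u. of_bool ((triple_class t, triple_class u) \<in> E_class_pairs) :: real"
  have R: "R_sum x = qform x ?R" and S: "S_sum x = qform x ?S"
    unfolding R_sum_def S_sum_def R_pair_def S_pair_def by (rule sum_pairs_eq_qform)+
  have "2 * (R_sum x + S_sum x) = qform x (\<lambda>t u. ?R t u + ?S t u + ?R u t + ?S u t)"
    unfolding qform_add R S by (simp add: qform_swap[of x ?R] qform_swap[of x ?S])
  also have "\<dots> \<le> qform x (\<lambda>t u. ?E t u + ?E u t)"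
    using R_S_pairs_le_E_class_pairs assms by (rule qform_mono)
  also have "\<dots> = 2 * qform x ?E"
    unfolding qform_add qform_swap[of x "\<lambda>t u. ?E u t"] by simp
  finally show ?thesis
    unfolding qform_E_class_pairs by simp
qed

section \<open>The maximum\<close>

lemma objective_le:
  assumes "feasible x"
  shows "objective x \<le> 4/27"
proof -
  have x_nonneg: "\<And>t. 0 \<le> x t" and total: "(\<Sum>t\<in>UNIV. x t) = 1"
    using assms by (auto simp: feasible_def)
  define a b c d u w where "a = class_mass x (LA, True)" and "b = class_mass x (LA, False)"
    and "c = class_mass x (LB, True)" and "d = class_mass x (LB, False)"
    and "u = class_mass x (LX, True)" and "w = class_mass x (LX, False)"
  have masses_nonneg: "0 \<le> a" "0 \<le> b" "0 \<le> c" "0 \<le> d" "0 \<le> u" "0 \<le> w"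
    unfolding a_def b_def c_def d_def u_def w_def class_mass_def
    using x_nonneg by (simp_all add: mass_nonneg)
  have s_sums: "s_sum x LA = a + b" "s_sum x LB = c + d" "s_sum x LX = u + w"
    unfolding a_def b_def c_def d_def u_def w_def by (rule s_sum_eq_class_masses)+
  have total_masses: "a + b + c + d + u + w = 1"
    using sum_s_sum[of x] total s_sums by simp
  have "T_sum x \<le> (a + b) * (c + d)"
    unfolding s_sums[symmetric] using x_nonneg by (rule T_sum_le)
  moreover have "R_sum x + S_sum x \<le> cross_mass a b c d u w"
    unfolding a_def b_def c_def d_def u_def w_def using x_nonneg by (rule R_sum_plus_S_sum_le)
  ultimately have "objective x \<le> (u + w) * ((a + b) * (c + d))
      + \<bar>(a + b) - (c + d)\<bar> * ((a + b) * (c + d)) + min (a + b) (c + d) * cross_mass a b c d u w"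
    unfolding objective_def s_sums using masses_nonneg by (intro weighted_mins_le) simp_all
  also have "\<dots> \<le> 4/27"
    using reduced_objective_le[OF masses_nonneg total_masses] .
  finally show ?thesis .
qed

definition maximiser :: "triple \<Rightarrow> real" where
  "maximiser t = (if t = (LA, LA, LX) then 2/3 else 0) + (if t = (LB, LB, LX) then 1/3 else 0)"

lemma feasible_maximiser: "feasible maximiser"
proof -
  have "(\<Sum>t\<in>UNIV. maximiser t) = 2/3 + 1/3"
    unfolding maximiser_def sum.distrib by simp
  then show ?thesis
    unfolding feasible_def by (simp add: maximiser_def)
qed

lemma objective_maximiser: "objective maximiser = 4/27"
proof -
  have support: "t \<notin> {(LA, LA, LX), (LB, LB, LX)} \<Longrightarrow> maximiser t = 0" for t
    by (auto simp: maximiser_def)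
  have pair_sum: "(\<Sum>(t, u) \<in> {(t, u). P t u}. maximiser t * maximiser u)
      = (\<Sum>t\<in>{(LA, LA, LX), (LB, LB, LX)}. \<Sum>u\<in>{(LA, LA, LX), (LB, LB, LX)}.
           of_bool (P t u) * (maximiser t * maximiser u))" for P
    unfolding sum_pairs_eq_qform using support by (rule qform_support)
  have T: "T_sum maximiser = 2/9" and R: "R_sum maximiser = 2/9" and S: "S_sum maximiser = 0"
    unfolding T_sum_def R_sum_def S_sum_def pair_sum
    by (simp_all add: arrow_def ok_def maximiser_def)
  have sA: "s_sum maximiser LA = 2/3" and sB: "s_sum maximiser LB = 1/3"
    and sX: "s_sum maximiser LX = 0"
    unfolding s_sum_def by (simp_all add: UNIV_lab maximiser_def)
  show ?thesis
    unfolding objective_def T R S sA sB sX by simp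
qed

theorem theorem6p4:
  shows "(\<exists>x. feasible x \<and> objective x = 4/27) \<and> (\<forall>x. feasible x \<longrightarrow> objective x \<le> 4/27)"
  using feasible_maximiser objective_maximiser objective_le by blast

end
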